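(* Let $n \geq 3$ be an integer and let $\ell$ be an odd positive integer. Then $B_n[\ell]/B_n[4\ell] \cong B_n/B_n[4]$.
   Context: $B_n$ denotes the braid group on $n$ strands with standard Artin generators $\sigma_1,\dots,\sigma_{n-1}$. The reduced integral Burau representation $\rho_{-1}: B_n \to GL(n-1,\mathbb{Z})$ is defined on generators by $\rho_{-1}(\sigma_1)=\begin{pmatrix}1&0\\1&1\end{pmatrix}\oplus \mathrm{Id}_{n-3}$, $\rho_{-1}(\sigma_{n-1})=\mathrm{Id}_{n-3}\oplus\begin{pmatrix}1&-1\\0&1\end{pmatrix}$, and for $1<i<n-1$, $\rho_{-1}(\sigma_i)=\mathrm{Id}_{i-2}\oplus\begin{pmatrix}1&-1&0\\0&1&0\\0&1&1\end{pmatrix}\oplus \mathrm{Id}_{n-i-2}$, where $\oplus$ denotes block-diagonal sum. For a positive integer $\ell$, let $r_\ell: GL(n-1,\mathbb{Z})\to GL(n-1,\mathbb{Z}/\ell\mathbb{Z})$ be entrywise reduction mod $\ell$. The level $\ell$ congruence subgroup of the braid group is $B_n[\ell] := \ker(r_\ell\circ\rho_{-1})$. *)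

theory Defs
  imports "HOL-Algebra.Coset" "Jordan_Normal_Form.Matrix"
begin

text \<open>Braid group B_n via its Artin presentation. A letter (i, True) stands for
  sigma_i and (i, False) for sigma_i inverse, 1 <= i <= n-1.\<close>

definition letters :: "nat \<Rightarrow> (nat \<times> bool) set" where
  "letters n = {(i, e). 1 \<le> i \<and> i < n}"

inductive_set braid_eq :: "nat \<Rightarrow> ((nat \<times> bool) list \<times> (nat \<times> bool) list) set"
  for n :: nat where
  refl: "w \<in> lists (letters n) \<Longrightarrow> (w, w) \<in> braid_eq n"
| sym: "(u, v) \<in> braid_eq n \<Longrightarrow> (v, u) \<in> braid_eq n"
| trans: "(u, v) \<in> braid_eq n \<Longrightarrow> (v, w) \<in> braid_eq n \<Longrightarrow> (u, w) \<in> braid_eq n"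
| ctx: "(u, v) \<in> braid_eq n \<Longrightarrow> a \<in> lists (letters n) \<Longrightarrow> b \<in> lists (letters n)
         \<Longrightarrow> (a @ u @ b, a @ v @ b) \<in> braid_eq n"
| cancel: "(i, e) \<in> letters n \<Longrightarrow> ([(i, e), (i, \<not> e)], []) \<in> braid_eq n"
| commute: "(i, True) \<in> letters n \<Longrightarrow> (j, True) \<in> letters n \<Longrightarrow> i + 2 \<le> j
         \<Longrightarrow> ([(i, True), (j, True)], [(j, True), (i, True)]) \<in> braid_eq n"
| braid: "(i, True) \<in> letters n \<Longrightarrow> (Suc i, True) \<in> letters n
         \<Longrightarrow> ([(i, True), (Suc i, True), (i, True)], [(Suc i, True), (i, True), (Suc i, True)])
             \<in> braid_eq n"

definition braid_group :: "nat \<Rightarrow> (nat \<times> bool) list set monoid" where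
  "braid_group n = \<lparr> partial_object.carrier = lists (letters n) // braid_eq n,
     monoid.mult = (\<lambda>A B. braid_eq n `` {(SOME u. u \<in> A) @ (SOME v. v \<in> B)}),
     monoid.one = braid_eq n `` {[]} \<rparr>"

text \<open>Reduced integral Burau representation at t = -1 (0-based matrix indices).
  rho(sigma_i) = I + N_i with N_i having -1 at (i-2, i-1) and 1 at (i, i-1) when in range;
  N_i^2 = 0, so rho(sigma_i^{-1}) = I - N_i.\<close>

definition burau_gen :: "nat \<Rightarrow> nat \<Rightarrow> bool \<Rightarrow> int mat" where
  "burau_gen n i e = mat (n - 1) (n - 1) (\<lambda>(r, c).
      if r = c then 1
      else if r + 2 = i \<and> c + 1 = i then (if e then -1 else 1)
      else if r = i \<and> c + 1 = i then (if e then 1 else -1)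
      else 0)"

definition burau_word :: "nat \<Rightarrow> (nat \<times> bool) list \<Rightarrow> int mat" where
  "burau_word n w = foldr (\<lambda>(i, e) M. burau_gen n i e * M) w (1\<^sub>m (n - 1))"

definition mod_mat :: "nat \<Rightarrow> int mat \<Rightarrow> int mat" where
  "mod_mat l M = map_mat (\<lambda>a. a mod int l) M"

definition braid_cong :: "nat \<Rightarrow> nat \<Rightarrow> (nat \<times> bool) list set set" where
  "braid_cong n l = {x \<in> carrier (braid_group n).
      \<forall>w \<in> x. mod_mat l (burau_word n w) = mod_mat l (1\<^sub>m (n - 1))}"

end

theory Submission
  imports Defs "HOL-Algebra.SndIsomorphismGrp" "HOL-Number_Theory.Cong"
begin

text \<open>Restricting the quotient map B_n \<rightarrow> B_n/B_n[4] to B_n[l] gives a homomorphism with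
  kernel B_n[l] \<inter> B_n[4], which is B_n[4l] because 4 and l are coprime. It is onto:
  rho(sigma_i) is a transvection I + N_i with N_i^2 = 0, so rho(sigma_i^q) = I + q N_i.
  Choosing q \<equiv> 0 mod l and q \<equiv> 1 mod 4 and replacing every letter of a braid word by its
  q-th power therefore yields an element of B_n[l] that is congruent to the original braid
  modulo B_n[4]. The second isomorphism theorem concludes.\<close>

section \<open>The Burau representation at t = -1\<close>

text \<open>\<open>burau_power n k t\<close> is rho(sigma_(k+1))^t; its only off-diagonal entries lie in
  column k (0-based).\<close>

definition burau_power :: "nat \<Rightarrow> nat \<Rightarrow> int \<Rightarrow> int mat" where
  "burau_power n k t = mat (n - 1) (n - 1) (\<lambda>(r, c).
      if r = c then 1 else if Suc r = k \<and> c = k then -t else if r = Suc k \<and> c = k then t else 0)"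

lemma burau_power_dim [simp]:
  "dim_row (burau_power n k t) = n - 1" "dim_col (burau_power n k t) = n - 1"
  by (simp_all add: burau_power_def)

lemma burau_power_index:
  "r < n - 1 \<Longrightarrow> c < n - 1 \<Longrightarrow> burau_power n k t $$ (r, c) =
    (if r = c then 1 else if Suc r = k \<and> c = k then -t else if r = Suc k \<and> c = k then t else 0)"
  by (simp add: burau_power_def)

lemma burau_power_0: "burau_power n k 0 = 1\<^sub>m (n - 1)"
  by (auto simp: burau_power_def)

lemma burau_gen_eq_burau_power: "burau_gen n (Suc k) e = burau_power n k (if e then 1 else -1)"
  by (auto simp: burau_gen_def burau_power_def)

lemma burau_power_mult_index:
  assumes "dim_row M = n - 1" and "r < n - 1" and "c < dim_col M" and "k < n - 1"
  shows "(burau_power n k t * M) $$ (r, c) = M $$ (r, c)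
     + (if Suc r = k then - t * M $$ (k, c) else 0) + (if r = Suc k then t * M $$ (k, c) else 0)"
proof -
  have "(burau_power n k t * M) $$ (r, c) = (\<Sum>j<n - 1. burau_power n k t $$ (r, j) * M $$ (j, c))"
    using assms by (simp add: scalar_prod_def atLeast0LessThan)
  also have "\<dots> = (\<Sum>j<n - 1. (if j = r then M $$ (j, c) else 0)
       + (if Suc r = k \<and> j = k then - t * M $$ (j, c) else 0)
       + (if r = Suc k \<and> j = k then t * M $$ (j, c) else 0))"
    using assms(2) by (intro sum.cong) (auto simp: burau_power_index)
  also have "\<dots> = M $$ (r, c)
     + (if Suc r = k then - t * M $$ (k, c) else 0) + (if r = Suc k then t * M $$ (k, c) else 0)"
    using assms(2,4) by (simp add: sum.distrib sum.If_cases)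
  finally show ?thesis .
qed

lemma burau_power_add: "k < n - 1 \<Longrightarrow> burau_power n k s * burau_power n k t = burau_power n k (s + t)"
  by (rule eq_matI) (auto simp del: index_mult_mat(1) simp: burau_power_mult_index burau_power_index)

lemma burau_power_commute:
  assumes "Suc a < b" and "b < n - 1"
  shows "burau_power n a s * burau_power n b t = burau_power n b t * burau_power n a s"
  using assms
  by (intro eq_matI) (auto simp del: index_mult_mat(1) simp: burau_power_mult_index burau_power_index)

lemma burau_power_braid:
  assumes "Suc a < n - 1"
  shows "burau_power n a 1 * (burau_power n (Suc a) 1 * burau_power n a 1)
       = burau_power n (Suc a) 1 * (burau_power n a 1 * burau_power n (Suc a) 1)"
  using assms
  by (intro eq_matI) (auto simp del: index_mult_mat(1) simp: burau_power_mult_index burau_power_index)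

lemma burau_word_Nil [simp]: "burau_word n [] = 1\<^sub>m (n - 1)"
  by (simp add: burau_word_def)

lemma burau_word_Cons [simp]: "burau_word n ((i, e) # w) = burau_gen n i e * burau_word n w"
  by (simp add: burau_word_def)

lemma burau_gen_carrier [simp]: "burau_gen n i e \<in> carrier_mat (n - 1) (n - 1)"
  by (simp add: burau_gen_def)

lemma burau_word_carrier [simp]: "burau_word n w \<in> carrier_mat (n - 1) (n - 1)"
proof (induction w)
  case (Cons x w)
  then show ?case
    by (cases x) (simp only: burau_word_Cons mult_carrier_mat[OF burau_gen_carrier])
qed simp

lemma burau_word_append: "burau_word n (u @ v) = burau_word n u * burau_word n v"
proof (induction u)
  case (Cons x u)
  then show ?case
    by (cases x) (simp add: assoc_mult_mat[OF burau_gen_carrier burau_word_carrier burau_word_carrier])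
qed (simp add: carrier_matD[OF burau_word_carrier])

lemma letter_eq_Suc: "(i, e) \<in> letters n \<Longrightarrow> \<exists>k. i = Suc k \<and> k < n - 1"
  by (auto simp: letters_def intro!: exI[of _ "i - 1"])

lemma burau_word_replicate:
  "k < n - 1 \<Longrightarrow> burau_word n (replicate q (Suc k, e)) = burau_power n k (int q * (if e then 1 else -1))"
  by (induction q) (auto simp: burau_power_0 burau_gen_eq_burau_power burau_power_add algebra_simps)

lemma burau_word_eq_if_braid_eq: "(u, v) \<in> braid_eq n \<Longrightarrow> burau_word n u = burau_word n v"
proof (induction rule: braid_eq.induct)
  case (ctx u v a b)
  then show ?case by (simp add: burau_word_append)
next
  case (cancel i e)
  then obtain k where "i = Suc k" "k < n - 1" using letter_eq_Suc by blast
  then show ?case by (simp add: burau_gen_eq_burau_power burau_power_add burau_power_0)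
next
  case (commute i j)
  then obtain a b where "i = Suc a" "j = Suc b" "b < n - 1"
    using letter_eq_Suc by meson
  with commute have "Suc a < b" by simp
  with \<open>i = Suc a\<close> \<open>j = Suc b\<close> \<open>b < n - 1\<close> show ?case
    using burau_power_commute[of a b n 1 1] by (simp add: burau_gen_eq_burau_power)
next
  case (braid i)
  then obtain a where "i = Suc a" "Suc a < n - 1" using letter_eq_Suc by blast
  then show ?case by (simp add: burau_gen_eq_burau_power burau_power_braid)
qed simp_all

section \<open>Reduction modulo m\<close>

lemma mod_mat_mult:
  assumes A: "A \<in> carrier_mat a b" and B: "B \<in> carrier_mat b c"
  shows "mod_mat m (A * B) = mod_mat m (mod_mat m A * mod_mat m B)"
proof (rule eq_matI)
  fix r j assume "r < dim_row (mod_mat m (mod_mat m A * mod_mat m B))"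
    and "j < dim_col (mod_mat m (mod_mat m A * mod_mat m B))"
  then have rj: "r < a" "j < c" using A B by (auto simp: mod_mat_def)
  have "(\<Sum>k<b. A $$ (r, k) * B $$ (k, j)) mod int m
      = (\<Sum>k<b. (A $$ (r, k) mod int m) * (B $$ (k, j) mod int m) mod int m) mod int m"
    by (simp add: mod_sum_eq mod_mult_eq)
  also have "\<dots> = (\<Sum>k<b. (A $$ (r, k) mod int m) * (B $$ (k, j) mod int m)) mod int m"
    by (simp add: mod_sum_eq)
  finally show "mod_mat m (A * B) $$ (r, j) = mod_mat m (mod_mat m A * mod_mat m B) $$ (r, j)"
    using A B rj by (simp add: mod_mat_def scalar_prod_def atLeast0LessThan)
qed (use A B in \<open>auto simp: mod_mat_def\<close>)

lemma mod_mat_eq_iff: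
  assumes "dim_row A = dim_row B" and "dim_col A = dim_col B"
  shows "mod_mat m A = mod_mat m B \<longleftrightarrow>
    (\<forall>i < dim_row A. \<forall>j < dim_col A. A $$ (i, j) mod int m = B $$ (i, j) mod int m)"
proof
  assume eq: "mod_mat m A = mod_mat m B"
  show "\<forall>i < dim_row A. \<forall>j < dim_col A. A $$ (i, j) mod int m = B $$ (i, j) mod int m"
  proof (intro allI impI)
    fix i j assume "i < dim_row A" "j < dim_col A"
    then show "A $$ (i, j) mod int m = B $$ (i, j) mod int m"
      using arg_cong[OF eq, of "\<lambda>M. M $$ (i, j)"] assms by (simp add: mod_mat_def)
  qed
qed (use assms in \<open>auto simp: mod_mat_def intro!: eq_matI\<close>)

lemma mod_eq_mult_modulus_iff:
  assumes "coprime a (b :: int)"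
  shows "x mod (a * b) = y mod (a * b) \<longleftrightarrow> x mod a = y mod a \<and> x mod b = y mod b"
  using assms by (auto simp: mod_eq_dvd_iff intro: divides_mult dvd_mult_left dvd_mult_right)

lemma mod_mat_eq_mult_modulus_iff:
  assumes "coprime a b" and "dim_row A = dim_row B" and "dim_col A = dim_col B"
  shows "mod_mat (a * b) A = mod_mat (a * b) B \<longleftrightarrow> mod_mat a A = mod_mat a B \<and> mod_mat b A = mod_mat b B"
proof -
  have "coprime (int a) (int b)" using assms(1) by simp
  then show ?thesis
    using mod_eq_mult_modulus_iff unfolding mod_mat_eq_iff[OF assms(2,3)] of_nat_mult by blast
qed

lemma burau_power_mod_eq:
  assumes "t mod int m = t' mod int m"
  shows "mod_mat m (burau_power n k t) = mod_mat m (burau_power n k t')"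
  using assms mod_minus_cong[OF assms] by (intro eq_matI) (auto simp: mod_mat_def burau_power_index)

definition burau_congruent :: "nat \<Rightarrow> nat \<Rightarrow> (nat \<times> bool) list \<Rightarrow> (nat \<times> bool) list \<Rightarrow> bool" where
  "burau_congruent n m u v \<longleftrightarrow> mod_mat m (burau_word n u) = mod_mat m (burau_word n v)"

lemma burau_congruent_refl: "burau_congruent n m w w"
  by (simp add: burau_congruent_def)

lemma burau_congruent_append:
  "burau_congruent n m u u' \<Longrightarrow> burau_congruent n m v v' \<Longrightarrow> burau_congruent n m (u @ v) (u' @ v')"
  unfolding burau_congruent_def burau_word_append by (metis mod_mat_mult burau_word_carrier)

lemma burau_congruent_concat_map:
  "(\<And>x. x \<in> set xs \<Longrightarrow> burau_congruent n m (f x) (g x))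
    \<Longrightarrow> burau_congruent n m (concat (map f xs)) (concat (map g xs))"
  by (induction xs) (auto simp: burau_congruent_append, simp add: burau_congruent_def)

lemma burau_congruent_if_braid_eq: "(u, v) \<in> braid_eq n \<Longrightarrow> burau_congruent n m u v"
  by (simp add: burau_congruent_def burau_word_eq_if_braid_eq)

lemma burau_congruent_mult_modulus_iff:
  "coprime a b \<Longrightarrow> burau_congruent n (a * b) u v \<longleftrightarrow> burau_congruent n a u v \<and> burau_congruent n b u v"
  unfolding burau_congruent_def
  by (rule mod_mat_eq_mult_modulus_iff) (simp_all add: carrier_matD[OF burau_word_carrier])

definition power_word :: "nat \<Rightarrow> (nat \<times> bool) list \<Rightarrow> (nat \<times> bool) list" where
  "power_word q w = concat (map (replicate q) w)"

lemma power_word_0 [simp]: "power_word 0 w = []"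
  by (induction w) (auto simp: power_word_def)

lemma power_word_1 [simp]: "power_word 1 w = w"
  by (induction w) (auto simp: power_word_def)

lemma power_word_lists: "w \<in> lists (letters n) \<Longrightarrow> power_word q w \<in> lists (letters n)"
  by (auto simp: power_word_def)

lemma burau_congruent_power_word:
  assumes "[q = p] (mod m)" and "w \<in> lists (letters n)"
  shows "burau_congruent n m (power_word q w) (power_word p w)"
  unfolding power_word_def
proof (rule burau_congruent_concat_map)
  fix x assume "x \<in> set w"
  moreover obtain i e where x: "x = (i, e)" by fastforce
  ultimately obtain k where k: "i = Suc k" "k < n - 1"
    using assms(2) letter_eq_Suc by blast
  have "int q mod int m = int p mod int m"
    using assms(1) by (simp add: cong_def flip: of_nat_mod)
  then have "int q * (if e then 1 else -1) mod int m = int p * (if e then 1 else -1) mod int m"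
    by (rule mod_mult_cong) simp
  then show "burau_congruent n m (replicate q x) (replicate p x)"
    unfolding burau_congruent_def x k burau_word_replicate[OF k(2)] by (rule burau_power_mod_eq)
qed

section \<open>The braid group\<close>

definition braid_class :: "nat \<Rightarrow> (nat \<times> bool) list \<Rightarrow> (nat \<times> bool) list set" where
  "braid_class n w = braid_eq n `` {w}"

lemma braid_eq_lists: "(u, v) \<in> braid_eq n \<Longrightarrow> u \<in> lists (letters n) \<and> v \<in> lists (letters n)"
  by (induction rule: braid_eq.induct) (auto simp: letters_def)

lemma equiv_braid_eq: "equiv (lists (letters n)) (braid_eq n)"
proof (rule equivI)
  show "braid_eq n \<subseteq> lists (letters n) \<times> lists (letters n)"
    by (clarify, drule braid_eq_lists) simp
qed (auto intro: refl_onI symI transI braid_eq.refl braid_eq.sym braid_eq.trans)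

lemma braid_eq_append:
  assumes "(u, u') \<in> braid_eq n" and "(v, v') \<in> braid_eq n"
  shows "(u @ v, u' @ v') \<in> braid_eq n"
proof -
  have "([] @ u @ v, [] @ u' @ v) \<in> braid_eq n"
    using assms braid_eq_lists by (intro braid_eq.ctx) auto
  moreover have "(u' @ v @ [], u' @ v' @ []) \<in> braid_eq n"
    using assms braid_eq_lists by (intro braid_eq.ctx) auto
  ultimately show ?thesis using braid_eq.trans by fastforce
qed

lemma braid_class_eq: "(u, v) \<in> braid_eq n \<Longrightarrow> braid_class n u = braid_class n v"
  unfolding braid_class_def by (rule equiv_class_eq[OF equiv_braid_eq])

lemma braid_class_self: "w \<in> lists (letters n) \<Longrightarrow> w \<in> braid_class n w"
  unfolding braid_class_def by (rule equiv_class_self[OF equiv_braid_eq])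

lemma carrier_braid_group: "carrier (braid_group n) = braid_class n ` lists (letters n)"
  by (auto simp: braid_group_def braid_class_def quotient_def)

lemma one_braid_group: "\<one>\<^bsub>braid_group n\<^esub> = braid_class n []"
  by (simp add: braid_group_def braid_class_def)

lemma mult_braid_class:
  assumes "u \<in> lists (letters n)" and "v \<in> lists (letters n)"
  shows "braid_class n u \<otimes>\<^bsub>braid_group n\<^esub> braid_class n v = braid_class n (u @ v)"
proof -
  let ?u = "SOME u'. u' \<in> braid_class n u" and ?v = "SOME v'. v' \<in> braid_class n v"
  have "?u \<in> braid_class n u" "?v \<in> braid_class n v"
    using assms braid_class_self by (metis someI)+
  then have "(u @ v, ?u @ ?v) \<in> braid_eq n"
    by (simp add: braid_class_def braid_eq_append)
  then show ?thesis
    by (simp add: braid_group_def braid_class_eq flip: braid_class_def)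
qed

definition inverse_word :: "(nat \<times> bool) list \<Rightarrow> (nat \<times> bool) list" where
  "inverse_word w = rev (map (\<lambda>(i, e). (i, \<not> e)) w)"

lemma inverse_word_lists: "w \<in> lists (letters n) \<Longrightarrow> inverse_word w \<in> lists (letters n)"
  by (auto simp: inverse_word_def letters_def)

lemma inverse_word_inverse_word [simp]: "inverse_word (inverse_word w) = w"
  by (induction w) (auto simp: inverse_word_def)

lemma braid_eq_append_inverse_word: "w \<in> lists (letters n) \<Longrightarrow> (w @ inverse_word w, []) \<in> braid_eq n"
proof (induction w)
  case Nil
  then show ?case by (simp add: inverse_word_def braid_eq.refl)
next
  case (Cons x w)
  obtain i e where x: "x = (i, e)" by fastforce
  have letter: "(i, e) \<in> letters n" "(i, \<not> e) \<in> letters n"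
    using Cons.prems x by (auto simp: letters_def)
  have "([(i, e)] @ (w @ inverse_word w) @ [(i, \<not> e)], [(i, e)] @ [] @ [(i, \<not> e)]) \<in> braid_eq n"
    using Cons letter by (intro braid_eq.ctx) auto
  moreover have "([(i, e), (i, \<not> e)], []) \<in> braid_eq n"
    using letter(1) by (rule braid_eq.cancel)
  ultimately show ?case
    using braid_eq.trans by (fastforce simp: x inverse_word_def)
qed

lemma braid_eq_inverse_word_append: "w \<in> lists (letters n) \<Longrightarrow> (inverse_word w @ w, []) \<in> braid_eq n"
  using braid_eq_append_inverse_word[OF inverse_word_lists, of w n] by simp

lemma group_braid_group: "group (braid_group n)"
proof (rule groupI)
  fix x y z
  assume "x \<in> carrier (braid_group n)" "y \<in> carrier (braid_group n)" "z \<in> carrier (braid_group n)"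
  then obtain u v w where "u \<in> lists (letters n)" "v \<in> lists (letters n)" "w \<in> lists (letters n)"
    and "x = braid_class n u" "y = braid_class n v" "z = braid_class n w"
    by (auto simp: carrier_braid_group)
  then show "x \<otimes>\<^bsub>braid_group n\<^esub> y \<in> carrier (braid_group n)"
    and "x \<otimes>\<^bsub>braid_group n\<^esub> y \<otimes>\<^bsub>braid_group n\<^esub> z
       = x \<otimes>\<^bsub>braid_group n\<^esub> (y \<otimes>\<^bsub>braid_group n\<^esub> z)"
    by (simp_all add: carrier_braid_group mult_braid_class)
next
  show "\<one>\<^bsub>braid_group n\<^esub> \<in> carrier (braid_group n)"
    by (simp add: carrier_braid_group one_braid_group)
next
  fix x assume "x \<in> carrier (braid_group n)"
  then obtain w where w: "w \<in> lists (letters n)" and x: "x = braid_class n w"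
    by (auto simp: carrier_braid_group)
  show "\<one>\<^bsub>braid_group n\<^esub> \<otimes>\<^bsub>braid_group n\<^esub> x = x"
    using w by (simp add: x one_braid_group mult_braid_class)
  have "braid_class n (inverse_word w) \<otimes>\<^bsub>braid_group n\<^esub> x = \<one>\<^bsub>braid_group n\<^esub>"
    using w by (simp add: x one_braid_group mult_braid_class inverse_word_lists
        braid_class_eq braid_eq_inverse_word_append)
  moreover have "braid_class n (inverse_word w) \<in> carrier (braid_group n)"
    using w by (simp add: carrier_braid_group inverse_word_lists)
  ultimately show "\<exists>y \<in> carrier (braid_group n). y \<otimes>\<^bsub>braid_group n\<^esub> x = \<one>\<^bsub>braid_group n\<^esub>"
    by blast
qed

lemma inv_braid_class:
  assumes "w \<in> lists (letters n)"
  shows "inv\<^bsub>braid_group n\<^esub> braid_class n w = braid_class n (inverse_word w)"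
proof (rule group.inv_equality[OF group_braid_group])
  show "braid_class n (inverse_word w) \<otimes>\<^bsub>braid_group n\<^esub> braid_class n w = \<one>\<^bsub>braid_group n\<^esub>"
    using assms by (simp add: one_braid_group mult_braid_class inverse_word_lists
        braid_class_eq braid_eq_inverse_word_append)
qed (use assms inverse_word_lists in \<open>auto simp: carrier_braid_group\<close>)

section \<open>Congruence subgroups\<close>

lemma burau_congruent_append_inverse_word:
  assumes "v \<in> lists (letters n)" and "burau_congruent n m u v"
  shows "burau_congruent n m (u @ inverse_word v) []"
proof -
  have "burau_congruent n m (u @ inverse_word v) (v @ inverse_word v)"
    using assms(2) by (intro burau_congruent_append burau_congruent_refl)
  moreover have "burau_congruent n m (v @ inverse_word v) []"
    using assms(1) by (intro burau_congruent_if_braid_eq braid_eq_append_inverse_word)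
  ultimately show ?thesis
    by (simp add: burau_congruent_def)
qed

lemma braid_class_in_braid_cong_iff:
  assumes "w \<in> lists (letters n)"
  shows "braid_class n w \<in> braid_cong n m \<longleftrightarrow> burau_congruent n m w []"
proof
  assume "braid_class n w \<in> braid_cong n m"
  then show "burau_congruent n m w []"
    using braid_class_self[OF assms] by (simp add: braid_cong_def burau_congruent_def)
next
  assume "burau_congruent n m w []"
  then have "mod_mat m (burau_word n v) = mod_mat m (1\<^sub>m (n - 1))" if "v \<in> braid_class n w" for v
    using that by (simp add: braid_class_def burau_congruent_def burau_word_eq_if_braid_eq)
  moreover have "braid_class n w \<in> carrier (braid_group n)"
    using assms by (simp add: carrier_braid_group)
  ultimately show "braid_class n w \<in> braid_cong n m"
    by (simp add: braid_cong_def)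
qed

lemma braid_cong_subset_carrier: "braid_cong n m \<subseteq> carrier (braid_group n)"
  by (auto simp: braid_cong_def)

lemma braid_cong_eq_image:
  "braid_cong n m = braid_class n ` {w \<in> lists (letters n). burau_congruent n m w []}"
  (is "_ = ?image")
proof
  show "braid_cong n m \<subseteq> ?image"
  proof
    fix x assume x: "x \<in> braid_cong n m"
    then obtain w where "w \<in> lists (letters n)" "x = braid_class n w"
      using braid_cong_subset_carrier[of n m] by (auto simp: carrier_braid_group)
    with x show "x \<in> ?image" by (simp add: braid_class_in_braid_cong_iff)
  qed
  show "?image \<subseteq> braid_cong n m"
    using braid_class_in_braid_cong_iff by blast
qed

lemma subgroup_braid_cong: "subgroup (braid_cong n m) (braid_group n)"
proof -
  interpret group "braid_group n" by (rule group_braid_group)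
  show ?thesis
  proof (rule subgroupI)
    show "braid_cong n m \<subseteq> carrier (braid_group n)" by (rule braid_cong_subset_carrier)
    show "braid_cong n m \<noteq> {}"
      using braid_class_in_braid_cong_iff[of "[]" n m] burau_congruent_refl by auto
  next
    fix x assume "x \<in> braid_cong n m"
    then obtain w where w: "w \<in> lists (letters n)" "burau_congruent n m w []" "x = braid_class n w"
      by (auto simp: braid_cong_eq_image)
    have "burau_congruent n m ([] @ inverse_word w) []"
      using w(1,2) by (intro burau_congruent_append_inverse_word) (simp_all add: burau_congruent_def)
    then show "inv\<^bsub>braid_group n\<^esub> x \<in> braid_cong n m"
      using w by (simp add: inv_braid_class braid_class_in_braid_cong_iff inverse_word_lists)
  next
    fix x y assume "x \<in> braid_cong n m" "y \<in> braid_cong n m"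
    then obtain u v where "u \<in> lists (letters n)" "burau_congruent n m u []" "x = braid_class n u"
      and "v \<in> lists (letters n)" "burau_congruent n m v []" "y = braid_class n v"
      by (auto simp: braid_cong_eq_image)
    then show "x \<otimes>\<^bsub>braid_group n\<^esub> y \<in> braid_cong n m"
      using burau_congruent_append[of n m u "[]" v "[]"]
      by (simp add: mult_braid_class braid_class_in_braid_cong_iff)
  qed
qed

lemma normal_braid_cong: "braid_cong n m \<lhd> braid_group n"
proof -
  interpret group "braid_group n" by (rule group_braid_group)
  have "x \<otimes>\<^bsub>braid_group n\<^esub> h \<otimes>\<^bsub>braid_group n\<^esub> inv\<^bsub>braid_group n\<^esub> x \<in> braid_cong n m"
    if x: "x \<in> carrier (braid_group n)" and h: "h \<in> braid_cong n m" for x h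
  proof -
    obtain u w where u: "u \<in> lists (letters n)" "x = braid_class n u"
      and w: "w \<in> lists (letters n)" "burau_congruent n m w []" "h = braid_class n w"
      using x h by (auto simp: carrier_braid_group braid_cong_eq_image)
    have "burau_congruent n m (u @ w) (u @ [])"
      using w(2) by (intro burau_congruent_append burau_congruent_refl)
    then have "burau_congruent n m ((u @ w) @ inverse_word u) []"
      using u(1) by (intro burau_congruent_append_inverse_word) simp_all
    then show ?thesis
      using u w
      by (simp add: inv_braid_class mult_braid_class inverse_word_lists braid_class_in_braid_cong_iff)
  qed
  then show ?thesis
    by (simp add: normal_inv_iff subgroup_braid_cong)
qed

lemma braid_cong_mult_coprime:
  assumes "coprime a b"
  shows "braid_cong n (a * b) = braid_cong n a \<inter> braid_cong n b"
proof (rule Set.set_eqI)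
  fix x
  show "x \<in> braid_cong n (a * b) \<longleftrightarrow> x \<in> braid_cong n a \<inter> braid_cong n b"
  proof (cases "x \<in> carrier (braid_group n)")
    case True
    then obtain w where "w \<in> lists (letters n)" "x = braid_class n w"
      by (auto simp: carrier_braid_group)
    then show ?thesis
      by (simp add: braid_class_in_braid_cong_iff burau_congruent_mult_modulus_iff[OF assms])
  next
    case False
    then show ?thesis using braid_cong_subset_carrier by blast
  qed
qed

lemma braid_cong_set_mult_coprime:
  assumes "coprime m l"
  shows "braid_cong n m <#>\<^bsub>braid_group n\<^esub> braid_cong n l = carrier (braid_group n)"
proof
  interpret group "braid_group n" by (rule group_braid_group)
  show "braid_cong n m <#>\<^bsub>braid_group n\<^esub> braid_cong n l \<subseteq> carrier (braid_group n)"
    by (intro set_mult_closed braid_cong_subset_carrier)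
  show "carrier (braid_group n) \<subseteq> braid_cong n m <#>\<^bsub>braid_group n\<^esub> braid_cong n l"
  proof
    fix x assume "x \<in> carrier (braid_group n)"
    then obtain w where w: "w \<in> lists (letters n)" and x: "x = braid_class n w"
      by (auto simp: carrier_braid_group)
    obtain k where k: "[l * k = 1] (mod m)"
      using assms cong_solve_coprime_nat[of l m] by (auto simp: coprime_commute)
    define v where "v = power_word (l * k) w"
    have v: "v \<in> lists (letters n)" "inverse_word v \<in> lists (letters n)"
      using w by (simp_all add: v_def power_word_lists inverse_word_lists)
    have "burau_congruent n m (power_word 1 w) v"
      unfolding v_def using k w by (intro burau_congruent_power_word) (simp_all add: cong_sym)
    then have "burau_congruent n m (w @ inverse_word v) []"
      using v(1) by (intro burau_congruent_append_inverse_word) (simp_all only: power_word_1)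
    then have in_m: "braid_class n (w @ inverse_word v) \<in> braid_cong n m"
      using w v by (simp add: braid_class_in_braid_cong_iff)
    have "burau_congruent n l v (power_word 0 w)"
      unfolding v_def using w by (intro burau_congruent_power_word) (simp_all add: cong_def)
    then have in_l: "braid_class n v \<in> braid_cong n l"
      using v by (simp add: braid_class_in_braid_cong_iff)
    have "(w @ inverse_word v @ v, w @ []) \<in> braid_eq n"
      using w v by (intro braid_eq_append braid_eq.refl braid_eq_inverse_word_append)
    then have "x = braid_class n (w @ inverse_word v) \<otimes>\<^bsub>braid_group n\<^esub> braid_class n v"
      using w v by (simp add: x mult_braid_class braid_class_eq)
    with in_m in_l show "x \<in> braid_cong n m <#>\<^bsub>braid_group n\<^esub> braid_cong n l"
      unfolding set_mult_def by blast
  qed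
qed

lemma (in group) supplement_quotient_iso:
  assumes "N \<lhd> G" and "subgroup S G" and "N <#> S = carrier G"
  shows "G\<lparr>carrier := S\<rparr> Mod (N \<inter> S) \<cong> G Mod N"
proof -
  interpret second_isomorphism_grp N G S
    using assms(1,2) by (simp add: second_isomorphism_grp_def second_isomorphism_grp_axioms_def)
  show ?thesis
    using normal_intersection_quotient_isom assms(3) by (auto intro: is_isoI)
qed

theorem theorem3p3:
  fixes n l :: nat
  assumes "n \<ge> 3" and "odd l"
  shows "((braid_group n)\<lparr>carrier := braid_cong n l\<rparr> Mod braid_cong n (4 * l))
           \<cong> (braid_group n Mod braid_cong n 4)"
proof -
  interpret group "braid_group n" by (rule group_braid_group)
  have coprime_4_l: "coprime 4 l"
    using assms(2) coprime_power_left_iff[of 2 2 l] by simp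
  then have "braid_cong n 4 \<inter> braid_cong n l = braid_cong n (4 * l)"
    by (simp add: braid_cong_mult_coprime)
  then show ?thesis
    using supplement_quotient_iso[OF normal_braid_cong subgroup_braid_cong
        braid_cong_set_mult_coprime[OF coprime_4_l]]
    by simp
qed

end
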